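(* Let $p_1,p_2,\dots$ be integers $\ge 2$ and let $H_k=\wr_{i=1}^{k}C_{p_i}$, realized as the group of automorphisms of the first $k$ levels of the spherically homogeneous rooted tree with branching numbers $p_1,p_2,\dots$ whose vertex permutation at every vertex of level $i-1$ is a power of the cyclic shift on $p_i$ letters. Let $f_{k,k+1}:H_k\to H_{k+1}$ be the injective homomorphism extending an automorphism by trivial vertex permutations at level $k$ (i.e. $g\mapsto g(e,\dots,e)$), and $f_{k,j}$ the compositions. Then the direct limit $\varinjlim H_k$ of this direct system has commutator width $1$.
   Context: The commutator width $cw(G)$ of a group $G$ is the least $n$ such that every element of $G'$ is a product of at most $n$ commutators. *)

theory Defs
  imports "HOL-Algebra.Algebra"
begin

definition commutator :: "('a, 'b) monoid_scheme \<Rightarrow> 'a \<Rightarrow> 'a \<Rightarrow> 'a" where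
  "commutator G x y = x \<otimes>\<^bsub>G\<^esub> y \<otimes>\<^bsub>G\<^esub> inv\<^bsub>G\<^esub> x \<otimes>\<^bsub>G\<^esub> inv\<^bsub>G\<^esub> y"

fun comm_prod :: "('a, 'b) monoid_scheme \<Rightarrow> ('a \<times> 'a) list \<Rightarrow> 'a" where
  "comm_prod G [] = \<one>\<^bsub>G\<^esub>"
| "comm_prod G ((a, b) # xs) = commutator G a b \<otimes>\<^bsub>G\<^esub> comm_prod G xs"

definition prod_of_commutators :: "('a, 'b) monoid_scheme \<Rightarrow> nat \<Rightarrow> 'a \<Rightarrow> bool" where
  "prod_of_commutators G n x \<longleftrightarrow>
     (\<exists>xs. length xs \<le> n \<and> set xs \<subseteq> carrier G \<times> carrier G \<and> x = comm_prod G xs)"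

definition commutator_width :: "('a, 'b) monoid_scheme \<Rightarrow> nat" where
  "commutator_width G =
     (LEAST n. \<forall>x \<in> derived G (carrier G). prod_of_commutators G n x)"

definition dl_rel :: "(nat \<Rightarrow> ('a, 'b) monoid_scheme) \<Rightarrow> (nat \<Rightarrow> nat \<Rightarrow> 'a \<Rightarrow> 'a)
    \<Rightarrow> ((nat \<times> 'a) \<times> (nat \<times> 'a)) set" where
  "dl_rel G f = {((k, x), (l, y)). x \<in> carrier (G k) \<and> y \<in> carrier (G l) \<and>
                   (\<exists>j \<ge> max k l. f k j x = f l j y)}"

definition dl_mult :: "(nat \<Rightarrow> ('a, 'b) monoid_scheme) \<Rightarrow> (nat \<Rightarrow> nat \<Rightarrow> 'a \<Rightarrow> 'a)
    \<Rightarrow> (nat \<times> 'a) set \<Rightarrow> (nat \<times> 'a) set \<Rightarrow> (nat \<times> 'a) set" where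
  "dl_mult G f A B =
     (let a = (SOME a. a \<in> A); b = (SOME b. b \<in> B); j = max (fst a) (fst b)
      in dl_rel G f `` {(j, f (fst a) j (snd a) \<otimes>\<^bsub>G j\<^esub> f (fst b) j (snd b))})"

definition direct_limit :: "(nat \<Rightarrow> ('a, 'b) monoid_scheme) \<Rightarrow> (nat \<Rightarrow> nat \<Rightarrow> 'a \<Rightarrow> 'a)
    \<Rightarrow> ((nat \<times> 'a) set) monoid" where
  "direct_limit G f =
     \<lparr> carrier = (SIGMA k:UNIV. carrier (G k)) // dl_rel G f,
       monoid.mult = dl_mult G f,
       one = dl_rel G f `` {(0, \<one>\<^bsub>G 0\<^esub>)} \<rparr>"

fun compose_steps :: "(nat \<Rightarrow> 'a \<Rightarrow> 'a) \<Rightarrow> nat \<Rightarrow> nat \<Rightarrow> 'a \<Rightarrow> 'a" where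
  "compose_steps step k 0 = id"
| "compose_steps step k (Suc n) = step (k + n) \<circ> compose_steps step k n"

definition system_maps :: "(nat \<Rightarrow> 'a \<Rightarrow> 'a) \<Rightarrow> nat \<Rightarrow> nat \<Rightarrow> 'a \<Rightarrow> 'a" where
  "system_maps step k j = compose_steps step k (j - k)"

(* branching numbers p 1, p 2, ...; vertices of level j are lists [x_1,...,x_j] with x_i < p i.
   V p k = vertices of the first k levels (levels 0..k). *)
definition tree_verts :: "(nat \<Rightarrow> nat) \<Rightarrow> nat \<Rightarrow> nat list set" where
  "tree_verts p k = {v. length v \<le> k \<and> (\<forall>i < length v. v ! i < p (Suc i))}"

(* automorphism of the first k levels whose vertex permutation at every vertex u
   of level i-1 (i \<le> k) is a power of the cyclic shift x \<mapsto> x+1 mod p i;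
   extended by the identity outside the truncated tree *)
definition cyc_aut :: "(nat \<Rightarrow> nat) \<Rightarrow> nat \<Rightarrow> (nat list \<Rightarrow> nat list) \<Rightarrow> bool" where
  "cyc_aut p k g \<longleftrightarrow>
     (\<forall>v. v \<notin> tree_verts p k \<longrightarrow> g v = v) \<and>
     bij_betw g (tree_verts p k) (tree_verts p k) \<and>
     (\<forall>v \<in> tree_verts p k. length (g v) = length v \<and>
                           (\<forall>i \<le> length v. g (take i v) = take i (g v))) \<and>
     (\<forall>u \<in> tree_verts p k. length u < k \<longrightarrow>
        (\<exists>m::nat. \<forall>x < p (Suc (length u)).
            g (u @ [x]) = g u @ [(x + m) mod p (Suc (length u))]))"

definition H :: "(nat \<Rightarrow> nat) \<Rightarrow> nat \<Rightarrow> (nat list \<Rightarrow> nat list) monoid" where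
  "H p k = \<lparr> carrier = {g. cyc_aut p k g}, monoid.mult = (\<circ>), one = id \<rparr>"

definition extend_step :: "(nat \<Rightarrow> nat) \<Rightarrow> nat \<Rightarrow> (nat list \<Rightarrow> nat list) \<Rightarrow> (nat list \<Rightarrow> nat list)" where
  "extend_step p k g = (\<lambda>v. if v \<in> tree_verts p (Suc k) then g (take k v) @ drop k v else v)"

end

(*
  An element of H_k is determined by its portrait, the exponent of the cyclic shift it performs
  at each vertex of the first k levels. Summing the exponents over level n < k modulo p_(n+1)
  is a homomorphism from H_k to the cyclic group of order p_(n+1); call g balanced if all these
  sums vanish. Balanced elements form a subgroup that contains every commutator.

  Conversely, let b be the odometer (adding machine), whose level sums are all 1 and which
  permutes each level in a single cycle. For balanced g, the element g b again has all level
  sums 1, and every such h is conjugate to b: a conjugator a with h a = a b is built level by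
  level, its exponents along the cycle of b being the partial sums of the defects of h; the
  cycle closes up exactly because the level sums of h are 1. Hence g = [a, b].

  The extension maps are injective and preserve balance, so the derived subgroup of the direct
  limit consists of the classes of balanced elements, each a single commutator, and for
  p_1, p_2 >= 2 it contains a nontrivial element of H_2.
*)

theory Submission
  imports Defs "HOL-Number_Theory.Cong"
begin

section \<open>Commutator width\<close>

lemma (in group) commutator_width_eq_1:
  assumes commutators: "\<And>x. x \<in> derived G (carrier G) \<Longrightarrow> \<exists>a\<in>carrier G. \<exists>b\<in>carrier G. x = commutator G a b"
    and nontrivial: "derived G (carrier G) \<noteq> {\<one>}"
  shows "commutator_width G = 1"
  unfolding commutator_width_def
proof (rule Least_equality)
  show "\<forall>x \<in> derived G (carrier G). prod_of_commutators G 1 x"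
  proof
    fix x assume "x \<in> derived G (carrier G)"
    then obtain a b where "a \<in> carrier G" "b \<in> carrier G" "x = commutator G a b"
      using commutators by blast
    then show "prod_of_commutators G 1 x"
      unfolding prod_of_commutators_def
      by (intro exI[of _ "[(a, b)]"]) (simp add: commutator_def)
  qed
next
  fix n assume all: "\<forall>x \<in> derived G (carrier G). prod_of_commutators G n x"
  have "\<one> \<in> derived G (carrier G)"
    by (rule subgroup.one_closed[OF derived_is_subgroup]) simp
  with nontrivial obtain x where "x \<in> derived G (carrier G)" "x \<noteq> \<one>"
    by blast
  with all obtain xs where "length xs \<le> n" "x = comm_prod G xs"
    by (auto simp: prod_of_commutators_def)
  with \<open>x \<noteq> \<one>\<close> show "1 \<le> n"
    by (cases xs) auto
qed

lemma (in group) commutator_eqI: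
  assumes "g \<in> carrier G" "a \<in> carrier G" "b \<in> carrier G" "g \<otimes> b \<otimes> a = a \<otimes> b"
  shows "commutator G a b = g"
proof -
  have "commutator G a b = g \<otimes> b \<otimes> a \<otimes> inv a \<otimes> inv b"
    using assms(4) by (simp add: commutator_def)
  also have "\<dots> = g"
    using assms(1-3) by (simp add: m_assoc)
  finally show ?thesis .
qed

lemma (in group) commutator_in_derived:
  "a \<in> carrier G \<Longrightarrow> b \<in> carrier G \<Longrightarrow> commutator G a b \<in> derived G (carrier G)"
  unfolding derived_def commutator_def by (blast intro: generate.incl)

section \<open>Direct limits of groups indexed by the natural numbers\<close>

locale direct_system =
  fixes G :: "nat \<Rightarrow> ('a, 'b) monoid_scheme" and f :: "nat \<Rightarrow> nat \<Rightarrow> 'a \<Rightarrow> 'a"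
  assumes group_G: "group (G k)"
    and hom_f: "k \<le> j \<Longrightarrow> f k j \<in> hom (G k) (G j)"
    and f_trans: "k \<le> j \<Longrightarrow> j \<le> l \<Longrightarrow> x \<in> carrier (G k) \<Longrightarrow> f j l (f k j x) = f k l x"
begin

abbreviation limit :: "((nat \<times> 'a) set) monoid" where
  "limit \<equiv> direct_limit G f"

definition to_limit :: "nat \<Rightarrow> 'a \<Rightarrow> (nat \<times> 'a) set" where
  "to_limit k x = dl_rel G f `` {(k, x)}"

lemma f_closed: "k \<le> j \<Longrightarrow> x \<in> carrier (G k) \<Longrightarrow> f k j x \<in> carrier (G j)"
  by (rule hom_in_carrier[OF hom_f])

lemma G_m_closed: "x \<in> carrier (G k) \<Longrightarrow> y \<in> carrier (G k) \<Longrightarrow> x \<otimes>\<^bsub>G k\<^esub> y \<in> carrier (G k)"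
  by (rule monoid.m_closed[OF group.is_monoid[OF group_G]])

lemma f_mult_lift:
  assumes "k \<le> m" "l \<le> m" "m \<le> n" "x \<in> carrier (G k)" "y \<in> carrier (G l)"
  shows "f m n (f k m x \<otimes>\<^bsub>G m\<^esub> f l m y) = f k n x \<otimes>\<^bsub>G n\<^esub> f l n y"
  using assms by (simp add: hom_mult[OF hom_f] f_closed f_trans)

lemma dl_rel_iff:
  "((k, x), (l, y)) \<in> dl_rel G f \<longleftrightarrow>
     x \<in> carrier (G k) \<and> y \<in> carrier (G l) \<and> (\<forall>\<^sub>F j in sequentially. f k j x = f l j y)"
proof
  assume "((k, x), (l, y)) \<in> dl_rel G f"
  then obtain j where x: "x \<in> carrier (G k)" and y: "y \<in> carrier (G l)"
    and j: "max k l \<le> j" "f k j x = f l j y"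
    by (auto simp: dl_rel_def)
  have "f k n x = f l n y" if "j \<le> n" for n
    using f_trans[of k j n x] f_trans[of l j n y] j x y that by simp
  with x y show "x \<in> carrier (G k) \<and> y \<in> carrier (G l) \<and> (\<forall>\<^sub>F j in sequentially. f k j x = f l j y)"
    by (auto simp: eventually_sequentially)
next
  assume "x \<in> carrier (G k) \<and> y \<in> carrier (G l) \<and> (\<forall>\<^sub>F j in sequentially. f k j x = f l j y)"
  then obtain N where "x \<in> carrier (G k)" "y \<in> carrier (G l)" "\<forall>n\<ge>N. f k n x = f l n y"
    by (auto simp: eventually_sequentially)
  then show "((k, x), (l, y)) \<in> dl_rel G f"
    unfolding dl_rel_def by (auto intro!: exI[of _ "max N (max k l)"])
qed

lemma equiv_dl_rel: "equiv (SIGMA k:UNIV. carrier (G k)) (dl_rel G f)"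
proof (rule equivI)
  show "dl_rel G f \<subseteq> (SIGMA k:UNIV. carrier (G k)) \<times> (SIGMA k:UNIV. carrier (G k))"
    by (auto simp: dl_rel_def)
  show "refl_on (SIGMA k:UNIV. carrier (G k)) (dl_rel G f)"
    by (auto simp: refl_on_def dl_rel_iff dl_rel_def)
  show "sym (dl_rel G f)"
    by (auto simp: sym_def dl_rel_iff eq_commute)
  show "trans (dl_rel G f)"
    unfolding trans_def by (auto simp: dl_rel_iff elim: eventually_elim2)
qed

lemma to_limit_eq_iff:
  assumes "x \<in> carrier (G k)" "y \<in> carrier (G l)"
  shows "to_limit k x = to_limit l y \<longleftrightarrow> (\<forall>\<^sub>F j in sequentially. f k j x = f l j y)"
  using eq_equiv_class_iff[OF equiv_dl_rel] assms by (simp add: to_limit_def dl_rel_iff)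

lemma to_limit_lift:
  assumes "k \<le> j" "x \<in> carrier (G k)"
  shows "to_limit k x = to_limit j (f k j x)"
proof -
  have "\<forall>\<^sub>F n in sequentially. f k n x = f j n (f k j x)"
    using assms by (auto simp: eventually_sequentially f_trans intro!: exI[of _ j])
  then show ?thesis
    using assms by (simp add: to_limit_eq_iff f_closed)
qed

lemma carrier_limit: "carrier limit = {to_limit k x | k x. x \<in> carrier (G k)}"
  by (auto simp: direct_limit_def quotient_def to_limit_def)

lemma to_limit_closed: "x \<in> carrier (G k) \<Longrightarrow> to_limit k x \<in> carrier limit"
  by (auto simp: carrier_limit)

lemma eventually_to_limit:
  assumes "a \<in> carrier limit"
  shows "\<forall>\<^sub>F j in sequentially. \<exists>x \<in> carrier (G j). a = to_limit j x"
proof -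
  obtain k x where "x \<in> carrier (G k)" "a = to_limit k x"
    using assms by (auto simp: carrier_limit)
  then show ?thesis
    by (auto simp: eventually_sequentially to_limit_lift f_closed intro!: exI[of _ k])
qed

lemma to_limit_mult:
  assumes "k \<le> j" "l \<le> j" "x \<in> carrier (G k)" "y \<in> carrier (G l)"
  shows "to_limit k x \<otimes>\<^bsub>limit\<^esub> to_limit l y = to_limit j (f k j x \<otimes>\<^bsub>G j\<^esub> f l j y)"
proof -
  \<comment> \<open>\<open>dl_mult\<close> multiplies representatives chosen by \<open>SOME\<close>; they agree with
    \<open>(k, x)\<close> and \<open>(l, y)\<close> at all large levels, which is all that matters.\<close>
  define a where "a = (SOME a. a \<in> to_limit k x)"
  define b where "b = (SOME b. b \<in> to_limit l y)"
  have "(k, x) \<in> to_limit k x" "(l, y) \<in> to_limit l y"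
    using assms by (simp_all add: to_limit_def dl_rel_iff)
  then have "a \<in> to_limit k x" "b \<in> to_limit l y"
    unfolding a_def b_def by (meson someI)+
  then obtain k' x' l' y' where ab: "a = (k', x')" "b = (l', y')"
    and x': "x' \<in> carrier (G k')" "\<forall>\<^sub>F n in sequentially. f k n x = f k' n x'"
    and y': "y' \<in> carrier (G l')" "\<forall>\<^sub>F n in sequentially. f l n y = f l' n y'"
    by (cases a, cases b) (auto simp: to_limit_def dl_rel_iff)
  define m where "m = max k' l'"
  have "to_limit k x \<otimes>\<^bsub>limit\<^esub> to_limit l y = dl_mult G f (to_limit k x) (to_limit l y)"
    by (simp add: direct_limit_def)
  also have "\<dots> = to_limit m (f k' m x' \<otimes>\<^bsub>G m\<^esub> f l' m y')"
    unfolding dl_mult_def Let_def a_def[symmetric] b_def[symmetric] ab m_def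
    by (simp add: to_limit_def)
  also have "\<dots> = to_limit j (f k j x \<otimes>\<^bsub>G j\<^esub> f l j y)"
  proof (subst to_limit_eq_iff)
    show "f k' m x' \<otimes>\<^bsub>G m\<^esub> f l' m y' \<in> carrier (G m)" "f k j x \<otimes>\<^bsub>G j\<^esub> f l j y \<in> carrier (G j)"
      using assms x' y' by (simp_all add: m_def f_closed G_m_closed)
    have "\<forall>\<^sub>F n in sequentially. m \<le> n \<and> j \<le> n"
      by (auto simp: eventually_sequentially intro!: exI[of _ "max m j"])
    with x'(2) y'(2) show "\<forall>\<^sub>F n in sequentially.
        f m n (f k' m x' \<otimes>\<^bsub>G m\<^esub> f l' m y') = f j n (f k j x \<otimes>\<^bsub>G j\<^esub> f l j y)"
      by eventually_elim (use assms x' y' in \<open>simp add: m_def f_mult_lift\<close>)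
  qed
  finally show ?thesis .
qed

lemma to_limit_mult_same:
  assumes "x \<in> carrier (G k)" "y \<in> carrier (G k)"
  shows "to_limit k x \<otimes>\<^bsub>limit\<^esub> to_limit k y = to_limit k (x \<otimes>\<^bsub>G k\<^esub> y)"
  using to_limit_mult[OF order_refl order_refl assms] to_limit_lift[of k k "x \<otimes>\<^bsub>G k\<^esub> y"] assms
  by (simp add: hom_mult[OF hom_f] G_m_closed)

lemma one_limit: "\<one>\<^bsub>limit\<^esub> = to_limit k \<one>\<^bsub>G k\<^esub>"
proof -
  have one: "\<one>\<^bsub>G 0\<^esub> \<in> carrier (G 0)"
    by (rule monoid.one_closed[OF group.is_monoid[OF group_G]])
  have "\<one>\<^bsub>limit\<^esub> = to_limit 0 \<one>\<^bsub>G 0\<^esub>"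
    by (simp add: direct_limit_def to_limit_def)
  also have "\<dots> = to_limit k (f 0 k \<one>\<^bsub>G 0\<^esub>)"
    using one by (simp add: to_limit_lift)
  also have "f 0 k \<one>\<^bsub>G 0\<^esub> = \<one>\<^bsub>G k\<^esub>"
    by (simp add: hom_one[OF hom_f group_G group_G])
  finally show ?thesis .
qed

lemma common_level2:
  assumes "a \<in> carrier limit" "b \<in> carrier limit"
  obtains j x y where "x \<in> carrier (G j)" "y \<in> carrier (G j)" "a = to_limit j x" "b = to_limit j y"
proof -
  have "\<forall>\<^sub>F j in sequentially. (\<exists>x\<in>carrier (G j). a = to_limit j x) \<and> (\<exists>y\<in>carrier (G j). b = to_limit j y)"
    using eventually_to_limit[OF assms(1)] eventually_to_limit[OF assms(2)] by (rule eventually_conj)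
  then show ?thesis
    using that by (blast dest: eventually_happens'[OF sequentially_bot])
qed

lemma common_level3:
  assumes "a \<in> carrier limit" "b \<in> carrier limit" "c \<in> carrier limit"
  obtains j x y z where "x \<in> carrier (G j)" "y \<in> carrier (G j)" "z \<in> carrier (G j)"
    "a = to_limit j x" "b = to_limit j y" "c = to_limit j z"
proof -
  have "\<forall>\<^sub>F j in sequentially. (\<exists>x\<in>carrier (G j). a = to_limit j x) \<and>
      (\<exists>y\<in>carrier (G j). b = to_limit j y) \<and> (\<exists>z\<in>carrier (G j). c = to_limit j z)"
    using eventually_to_limit[OF assms(1)] eventually_to_limit[OF assms(2)] eventually_to_limit[OF assms(3)]
    by (intro eventually_conj)
  then show ?thesis
    using that by (blast dest: eventually_happens'[OF sequentially_bot])
qed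

lemma group_limit: "group limit"
proof (rule groupI)
  fix a b assume "a \<in> carrier limit" "b \<in> carrier limit"
  then obtain j x y where "x \<in> carrier (G j)" "y \<in> carrier (G j)" "a = to_limit j x" "b = to_limit j y"
    by (rule common_level2)
  then show "a \<otimes>\<^bsub>limit\<^esub> b \<in> carrier limit"
    by (simp add: to_limit_mult_same to_limit_closed G_m_closed)
next
  show "\<one>\<^bsub>limit\<^esub> \<in> carrier limit"
    by (simp add: one_limit[of 0] to_limit_closed monoid.one_closed[OF group.is_monoid[OF group_G]])
next
  fix a b c assume "a \<in> carrier limit" "b \<in> carrier limit" "c \<in> carrier limit"
  then obtain j x y z where "x \<in> carrier (G j)" "y \<in> carrier (G j)" "z \<in> carrier (G j)"
    "a = to_limit j x" "b = to_limit j y" "c = to_limit j z"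
    by (rule common_level3)
  then show "a \<otimes>\<^bsub>limit\<^esub> b \<otimes>\<^bsub>limit\<^esub> c = a \<otimes>\<^bsub>limit\<^esub> (b \<otimes>\<^bsub>limit\<^esub> c)"
    by (simp add: to_limit_mult_same G_m_closed monoid.m_assoc[OF group.is_monoid[OF group_G]])
next
  fix a assume "a \<in> carrier limit"
  then obtain k x where x: "x \<in> carrier (G k)" "a = to_limit k x"
    by (auto simp: carrier_limit)
  interpret Gk: group "G k" by (rule group_G)
  show "\<one>\<^bsub>limit\<^esub> \<otimes>\<^bsub>limit\<^esub> a = a"
    using x by (simp add: one_limit[of k] to_limit_mult_same)
  show "\<exists>b \<in> carrier limit. b \<otimes>\<^bsub>limit\<^esub> a = \<one>\<^bsub>limit\<^esub>"
    using x by (intro bexI[of _ "to_limit k (inv\<^bsub>G k\<^esub> x)"])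
      (simp_all add: one_limit[of k] to_limit_mult_same to_limit_closed)
qed

lemma to_limit_inv:
  assumes "x \<in> carrier (G k)"
  shows "inv\<^bsub>limit\<^esub> (to_limit k x) = to_limit k (inv\<^bsub>G k\<^esub> x)"
proof -
  interpret Gk: group "G k" by (rule group_G)
  show ?thesis
    using assms by (intro group.inv_equality[OF group_limit])
      (simp_all add: one_limit[of k] to_limit_mult_same to_limit_closed)
qed

lemma to_limit_commutator:
  assumes "x \<in> carrier (G k)" "y \<in> carrier (G k)"
  shows "commutator limit (to_limit k x) (to_limit k y) = to_limit k (commutator (G k) x y)"
proof -
  interpret Gk: group "G k" by (rule group_G)
  show ?thesis
    using assms by (simp add: commutator_def to_limit_inv to_limit_mult_same)
qed

lemma to_limit_inj:
  assumes inj: "\<And>j. k \<le> j \<Longrightarrow> inj_on (f k j) (carrier (G k))"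
    and x: "x \<in> carrier (G k)" and y: "y \<in> carrier (G k)" and eq: "to_limit k x = to_limit k y"
  shows "x = y"
proof -
  have "\<forall>\<^sub>F j in sequentially. f k j x = f k j y"
    using eq by (simp add: to_limit_eq_iff x y)
  then obtain N where "\<forall>n\<ge>N. f k n x = f k n y"
    by (auto simp: eventually_sequentially)
  then have "f k (max N k) x = f k (max N k) y"
    by simp
  moreover have "inj_on (f k (max N k)) (carrier (G k))"
    by (rule inj) simp
  ultimately show ?thesis
    using x y by (blast dest: inj_onD)
qed

lemma subgroup_limit:
  assumes S: "\<And>k. subgroup (S k) (G k)"
    and f_S: "\<And>k j x. k \<le> j \<Longrightarrow> x \<in> S k \<Longrightarrow> f k j x \<in> S j"
  shows "subgroup {to_limit k x | k x. x \<in> S k} limit"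
proof (rule group.subgroupI[OF group_limit])
  show "{to_limit k x | k x. x \<in> S k} \<subseteq> carrier limit"
    using subgroup.subset[OF S] by (auto intro: to_limit_closed)
  show "{to_limit k x | k x. x \<in> S k} \<noteq> {}"
    using subgroup.one_closed[OF S] by blast
next
  fix a assume "a \<in> {to_limit k x | k x. x \<in> S k}"
  then obtain k x where x: "x \<in> S k" "a = to_limit k x" by blast
  then have "inv\<^bsub>limit\<^esub> a = to_limit k (inv\<^bsub>G k\<^esub> x)"
    using subgroup.subset[OF S] to_limit_inv by blast
  moreover have "inv\<^bsub>G k\<^esub> x \<in> S k"
    using x by (simp add: subgroup.m_inv_closed[OF S])
  ultimately show "inv\<^bsub>limit\<^esub> a \<in> {to_limit k x | k x. x \<in> S k}"
    by blast
next
  fix a b assume "a \<in> {to_limit k x | k x. x \<in> S k}" "b \<in> {to_limit k x | k x. x \<in> S k}"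
  then obtain k x l y where xy: "x \<in> S k" "y \<in> S l" "a = to_limit k x" "b = to_limit l y" by blast
  have "f k (max k l) x \<otimes>\<^bsub>G (max k l)\<^esub> f l (max k l) y \<in> S (max k l)"
    using xy by (intro subgroup.m_closed[OF S] f_S) simp_all
  moreover have "a \<otimes>\<^bsub>limit\<^esub> b = to_limit (max k l) (f k (max k l) x \<otimes>\<^bsub>G (max k l)\<^esub> f l (max k l) y)"
  proof -
    have "x \<in> carrier (G k)" "y \<in> carrier (G l)"
      using xy subgroup.subset[OF S] by blast+
    then show ?thesis
      using to_limit_mult[OF max.cobounded1 max.cobounded2] xy by simp
  qed
  ultimately show "a \<otimes>\<^bsub>limit\<^esub> b \<in> {to_limit k x | k x. x \<in> S k}"
    by blast
qed

lemma derived_limit_subset: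
  assumes S: "\<And>k. subgroup (S k) (G k)"
    and f_S: "\<And>k j x. k \<le> j \<Longrightarrow> x \<in> S k \<Longrightarrow> f k j x \<in> S j"
    and commutator_S: "\<And>k x y. x \<in> carrier (G k) \<Longrightarrow> y \<in> carrier (G k) \<Longrightarrow> commutator (G k) x y \<in> S k"
  shows "derived limit (carrier limit) \<subseteq> {to_limit k x | k x. x \<in> S k}"
  unfolding derived_def
proof (rule group.generate_subgroup_incl[OF group_limit _ subgroup_limit[OF S f_S]])
  show "derived_set limit (carrier limit) \<subseteq> {to_limit k x | k x. x \<in> S k}"
  proof
    fix c assume "c \<in> derived_set limit (carrier limit)"
    then obtain a b where ab: "a \<in> carrier limit" "b \<in> carrier limit" "c = commutator limit a b"
      by (auto simp: commutator_def)
    from ab(1,2) obtain j x y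
      where "x \<in> carrier (G j)" "y \<in> carrier (G j)" "a = to_limit j x" "b = to_limit j y"
      by (rule common_level2)
    then show "c \<in> {to_limit k x | k x. x \<in> S k}"
      using ab(3) commutator_S by (fastforce simp: to_limit_commutator)
  qed
qed

end

lemma compose_steps_add:
  "compose_steps step k (m + n) = compose_steps step (k + m) n \<circ> compose_steps step k m"
  by (induction n) (simp_all add: add.assoc)

lemma system_maps_into:
  assumes "\<And>i x. x \<in> S i \<Longrightarrow> step i x \<in> S (Suc i)" "k \<le> j" "x \<in> S k"
  shows "system_maps step k j x \<in> S j"
proof -
  have "compose_steps step k n x \<in> S (k + n)" for n
    using assms(1,3) by (induction n) auto
  from this[of "j - k"] show ?thesis
    using assms(2) by (simp add: system_maps_def)
qed

lemma direct_system_system_maps: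
  assumes group: "\<And>k. group (G k)" and step: "\<And>k. step k \<in> hom (G k) (G (Suc k))"
  shows "direct_system G (system_maps step)"
proof (rule direct_system.intro)
  fix k j :: nat assume "k \<le> j"
  have "compose_steps step k n \<in> hom (G k) (G (k + n))" for n
  proof (induction n)
    case 0
    then show ?case by (simp add: hom_def)
  next
    case (Suc n)
    have "step (k + n) \<circ> compose_steps step k n \<in> hom (G k) (G (Suc (k + n)))"
      using Suc step by (rule hom_compose)
    then show ?case
      by (simp add: comp_def)
  qed
  from this[of "j - k"] \<open>k \<le> j\<close> show "system_maps step k j \<in> hom (G k) (G j)"
    by (simp add: system_maps_def)
next
  fix k j l :: nat and x assume "k \<le> j" "j \<le> l"
  then show "system_maps step j l (system_maps step k j x) = system_maps step k l x"
    using compose_steps_add[of step k "j - k" "l - j"] by (simp add: system_maps_def)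
qed (rule group)

lemma inj_on_system_maps:
  assumes "\<And>i. step i \<in> hom (G i) (G (Suc i))" "\<And>i. inj_on (step i) (carrier (G i))" "k \<le> j"
  shows "inj_on (system_maps step k j) (carrier (G k))"
proof -
  have "inj_on (compose_steps step k n) (carrier (G k)) \<and>
      compose_steps step k n ` carrier (G k) \<subseteq> carrier (G (k + n))" for n
  proof (induction n)
    case (Suc n)
    then have "inj_on (step (k + n) \<circ> compose_steps step k n) (carrier (G k))"
      using assms(2)[of "k + n"] by (blast intro: comp_inj_on inj_on_subset)
    moreover have "(step (k + n) \<circ> compose_steps step k n) ` carrier (G k) \<subseteq> carrier (G (k + Suc n))"
      using Suc hom_carrier[OF assms(1)[of "k + n"]] by (auto simp: image_subset_iff)
    ultimately show ?case
      by (simp add: comp_def)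
  qed simp
  then show ?thesis
    using assms(3) by (simp add: system_maps_def)
qed

section \<open>Portraits of tree automorphisms\<close>

definition portrait_map :: "(nat \<Rightarrow> nat) \<Rightarrow> (nat list \<Rightarrow> int) \<Rightarrow> nat list \<Rightarrow> nat list" where
  "portrait_map p M v = map (\<lambda>i. nat ((int (v ! i) + M (take i v)) mod int (p (Suc i)))) [0..<length v]"

definition truncated :: "(nat \<Rightarrow> nat) \<Rightarrow> nat \<Rightarrow> (nat list \<Rightarrow> nat list) \<Rightarrow> nat list \<Rightarrow> nat list" where
  "truncated p k g v = (if v \<in> tree_verts p k then g v else v)"

definition rotation :: "(nat list \<Rightarrow> nat list) \<Rightarrow> nat list \<Rightarrow> int" where
  "rotation g u = int (g (u @ [0]) ! length u)"

lemma length_portrait_map [simp]: "length (portrait_map p M v) = length v"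
  by (simp add: portrait_map_def)

lemma nth_portrait_map:
  "i < length v \<Longrightarrow> portrait_map p M v ! i = nat ((int (v ! i) + M (take i v)) mod int (p (Suc i)))"
  by (simp add: portrait_map_def)

lemma take_portrait_map: "take i (portrait_map p M v) = portrait_map p M (take i v)"
  by (rule nth_equalityI) (auto simp: nth_portrait_map)

lemma portrait_map_snoc:
  "portrait_map p M (u @ [x]) = portrait_map p M u @ [nat ((int x + M u) mod int (p (Suc (length u))))]"
  by (rule nth_equalityI) (auto simp: nth_portrait_map nth_append less_Suc_eq)

lemma portrait_map_cong:
  "(\<And>i. i < length v \<Longrightarrow> M (take i v) = M' (take i v)) \<Longrightarrow> portrait_map p M v = portrait_map p M' v"
  unfolding portrait_map_def by (rule map_cong) auto

lemma tree_verts_take: "v \<in> tree_verts p k \<Longrightarrow> take i v \<in> tree_verts p k"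
  by (auto simp: tree_verts_def)

lemma tree_verts_snoc:
  "u @ [x] \<in> tree_verts p k \<longleftrightarrow> u \<in> tree_verts p k \<and> length u < k \<and> x < p (Suc (length u))"
  by (auto simp: tree_verts_def nth_append less_Suc_eq split: if_splits)

lemma finite_tree_verts: "finite (tree_verts p k)"
proof -
  define B where "B = Max (p ` {..k})"
  have B: "p (Suc i) \<le> B" if "Suc i \<le> k" for i
    unfolding B_def using that by (intro Max_ge) auto
  have "set v \<subseteq> {..B}" if v: "v \<in> tree_verts p k" for v
  proof
    fix x assume "x \<in> set v"
    then obtain i where i: "i < length v" "x = v ! i" by (auto simp: in_set_conv_nth)
    with v have "x < p (Suc i)" "Suc i \<le> k" by (auto simp: tree_verts_def)
    with B[of i] show "x \<in> {..B}" by simp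
  qed
  then have "tree_verts p k \<subseteq> {v. set v \<subseteq> {..B} \<and> length v \<le> k}"
    by (auto simp: tree_verts_def)
  then show ?thesis
    using finite_lists_length_le[of "{..B}" k] finite_subset by blast
qed

lemma in_H: "g \<in> carrier (H p k) \<longleftrightarrow> cyc_aut p k g"
  by (simp add: H_def)

lemma H_mult [simp]: "g \<otimes>\<^bsub>H p k\<^esub> h = g \<circ> h"
  by (simp add: H_def)

lemma H_one [simp]: "\<one>\<^bsub>H p k\<^esub> = id"
  by (simp add: H_def)

lemma H_fixes_outside: "g \<in> carrier (H p k) \<Longrightarrow> v \<notin> tree_verts p k \<Longrightarrow> g v = v"
  by (simp add: H_def cyc_aut_def)

lemma H_length: "g \<in> carrier (H p k) \<Longrightarrow> v \<in> tree_verts p k \<Longrightarrow> length (g v) = length v"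
  by (simp add: H_def cyc_aut_def)

lemma H_snoc:
  "g \<in> carrier (H p k) \<Longrightarrow> u \<in> tree_verts p k \<Longrightarrow> length u < k \<Longrightarrow>
     \<exists>m. \<forall>x < p (Suc (length u)). g (u @ [x]) = g u @ [(x + m) mod p (Suc (length u))]"
  by (simp add: H_def cyc_aut_def)

lemma nat_add_mod_int: "0 < P \<Longrightarrow> nat ((int x + a) mod int P) = (x + nat (a mod int P)) mod P"
proof -
  assume "0 < P"
  then have "int ((x + nat (a mod int P)) mod P) = (int x + a mod int P) mod int P"
    by (simp add: zmod_int)
  then show ?thesis by (simp add: mod_add_right_eq)
qed

lemma truncated_comp:
  assumes "\<And>v. v \<in> tree_verts p k \<Longrightarrow> g v \<in> tree_verts p k"
  shows "truncated p k f \<circ> truncated p k g = truncated p k (f \<circ> g)"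
  using assms by (auto simp: truncated_def)

locale spherical_tree =
  fixes p :: "nat \<Rightarrow> nat"
  assumes branching_pos: "0 < p (Suc i)"
    \<comment> \<open>The vertices of level \<open>i\<close> have \<open>p (Suc i)\<close> children.\<close>
begin

lemma portrait_map_in_tree_verts: "v \<in> tree_verts p k \<Longrightarrow> portrait_map p M v \<in> tree_verts p k"
  using branching_pos by (auto simp: tree_verts_def nth_portrait_map nat_less_iff)

lemma int_portrait_map_nth:
  "i < length v \<Longrightarrow> int (portrait_map p M v ! i) = (int (v ! i) + M (take i v)) mod int (p (Suc i))"
  using branching_pos[of i] by (simp add: nth_portrait_map)

lemma inj_on_portrait_map: "inj_on (portrait_map p M) (tree_verts p k)"
proof
  fix v w assume v: "v \<in> tree_verts p k" and w: "w \<in> tree_verts p k"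
    and eq: "portrait_map p M v = portrait_map p M w"
  have len: "length v = length w"
    using arg_cong[OF eq, of length] by simp
  have "take i v = take i w" if "i \<le> length v" for i
    using that
  proof (induction i)
    case (Suc i)
    then have prefix: "take i v = take i w" and i: "i < length v" by simp_all
    have "(int (v ! i) + M (take i v)) mod int (p (Suc i)) = (int (w ! i) + M (take i v)) mod int (p (Suc i))"
      using arg_cong[OF eq, of "\<lambda>v. int (v ! i)"] i len prefix by (simp add: int_portrait_map_nth)
    then have "int (v ! i) mod int (p (Suc i)) = int (w ! i) mod int (p (Suc i))"
      using cong_add_rcancel[of "int (v ! i)" "M (take i v)"] by (simp add: cong_def)
    moreover have "v ! i < p (Suc i)" "w ! i < p (Suc i)"
      using v w i len by (auto simp: tree_verts_def)
    ultimately have "v ! i = w ! i" by simp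
    then show ?case using prefix i len by (simp add: take_Suc_conv_app_nth)
  qed simp
  then show "v = w" using len by (metis order_refl take_all)
qed

lemma bij_betw_portrait_map: "bij_betw (portrait_map p M) (tree_verts p k) (tree_verts p k)"
  using endo_inj_surj[OF finite_tree_verts _ inj_on_portrait_map] portrait_map_in_tree_verts
  by (simp add: bij_betw_def inj_on_portrait_map image_subset_iff)

lemma truncated_portrait_in_H: "truncated p k (portrait_map p M) \<in> carrier (H p k)"
  unfolding in_H cyc_aut_def
proof (intro conjI ballI allI impI)
  show "bij_betw (truncated p k (portrait_map p M)) (tree_verts p k) (tree_verts p k)"
    using bij_betw_portrait_map by (rule bij_betw_cong[THEN iffD1, rotated]) (simp add: truncated_def)
next
  fix u assume u: "u \<in> tree_verts p k" "length u < k"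
  let ?P = "p (Suc (length u))"
  have "nat ((int x + M u) mod int ?P) = (x + nat (M u mod int ?P)) mod ?P" for x
    using branching_pos by (rule nat_add_mod_int)
  then show "\<exists>m. \<forall>x < ?P. truncated p k (portrait_map p M) (u @ [x])
               = truncated p k (portrait_map p M) u @ [(x + m) mod ?P]"
    using u by (auto simp: truncated_def tree_verts_snoc portrait_map_snoc)
qed (auto simp: truncated_def tree_verts_take take_portrait_map)

lemma H_eq_truncated_portrait:
  assumes g: "g \<in> carrier (H p k)"
  shows "g = truncated p k (portrait_map p (rotation g))"
proof
  fix v
  show "g v = truncated p k (portrait_map p (rotation g)) v"
  proof (cases "v \<in> tree_verts p k")
    case False
    then show ?thesis using H_fixes_outside[OF g] by (simp add: truncated_def)
  next
    case True
    have "g v = portrait_map p (rotation g) v"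
      using True
    proof (induction v rule: rev_induct)
      case Nil
      then show ?case using H_length[OF g Nil] by (simp add: portrait_map_def)
    next
      case (snoc x u)
      let ?P = "p (Suc (length u))"
      have u: "u \<in> tree_verts p k" "length u < k" "x < ?P"
        using snoc.prems by (auto simp: tree_verts_snoc)
      obtain m where m: "\<forall>y < ?P. g (u @ [y]) = g u @ [(y + m) mod ?P]"
        using H_snoc[OF g u(1,2)] by blast
      have "rotation g u = int (m mod ?P)"
        using m branching_pos[of "length u"] H_length[OF g u(1)] by (simp add: rotation_def nth_append)
      moreover have "nat (int (m mod ?P) mod int ?P) = m mod ?P"
        by (metis mod_mod_trivial nat_int zmod_int)
      ultimately have "portrait_map p (rotation g) (u @ [x]) = portrait_map p (rotation g) u @ [(x + m) mod ?P]"
        using nat_add_mod_int[OF branching_pos] by (simp add: portrait_map_snoc mod_add_right_eq)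
      then show ?case using snoc.IH u m by simp
    qed
    then show ?thesis using True by (simp add: truncated_def)
  qed
qed

lemma carrier_H: "carrier (H p k) = range (\<lambda>M. truncated p k (portrait_map p M))"
proof (intro equalityI subsetI)
  fix g assume "g \<in> carrier (H p k)"
  then have "g = truncated p k (portrait_map p (rotation g))"
    by (rule H_eq_truncated_portrait)
  then show "g \<in> range (\<lambda>M. truncated p k (portrait_map p M))"
    by (rule range_eqI[where x = "rotation g"])
qed (auto intro: truncated_portrait_in_H)

lemma portrait_map_comp:
  "portrait_map p M1 (portrait_map p M2 v) = portrait_map p (\<lambda>u. M2 u + M1 (portrait_map p M2 u)) v"
proof (rule nth_equalityI)
  fix i assume "i < length (portrait_map p M1 (portrait_map p M2 v))"
  then have i: "i < length v" by simp
  have "int (portrait_map p M1 (portrait_map p M2 v) ! i)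
      = ((int (v ! i) + M2 (take i v)) mod int (p (Suc i)) + M1 (portrait_map p M2 (take i v)))
          mod int (p (Suc i))"
    using i by (simp add: int_portrait_map_nth take_portrait_map)
  also have "\<dots> = int (portrait_map p (\<lambda>u. M2 u + M1 (portrait_map p M2 u)) v ! i)"
    using i by (simp add: int_portrait_map_nth mod_add_left_eq add.assoc)
  finally show "portrait_map p M1 (portrait_map p M2 v) ! i
      = portrait_map p (\<lambda>u. M2 u + M1 (portrait_map p M2 u)) v ! i"
    by simp
qed simp

lemma truncated_portrait_comp:
  "truncated p k (portrait_map p M1) \<circ> truncated p k (portrait_map p M2)
     = truncated p k (portrait_map p (\<lambda>u. M2 u + M1 (portrait_map p M2 u)))"
proof -
  have "portrait_map p M1 \<circ> portrait_map p M2 = portrait_map p (\<lambda>u. M2 u + M1 (portrait_map p M2 u))"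
    by (rule ext) (simp add: portrait_map_comp)
  then show ?thesis by (simp add: truncated_comp portrait_map_in_tree_verts)
qed

lemma truncated_portrait_cong:
  assumes "\<And>u. u \<in> tree_verts p k \<Longrightarrow> length u < k \<Longrightarrow> [M u = M' u] (mod int (p (Suc (length u))))"
  shows "truncated p k (portrait_map p M) = truncated p k (portrait_map p M')"
proof
  fix v
  have "portrait_map p M v = portrait_map p M' v" if v: "v \<in> tree_verts p k"
  proof (rule nth_equalityI)
    fix i assume "i < length (portrait_map p M v)"
    then have i: "i < length v" by simp
    with v have "take i v \<in> tree_verts p k" "length (take i v) < k"
      by (auto simp: tree_verts_def)
    then have "[M (take i v) = M' (take i v)] (mod int (p (Suc (length (take i v)))))"
      by (rule assms)
    then have "M (take i v) mod int (p (Suc i)) = M' (take i v) mod int (p (Suc i))"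
      using i by (simp add: cong_def)
    then have "(int (v ! i) + M (take i v)) mod int (p (Suc i))
             = (int (v ! i) + M' (take i v)) mod int (p (Suc i))"
      by (rule mod_add_cong[OF refl])
    then show "portrait_map p M v ! i = portrait_map p M' v ! i"
      using i by (simp add: nth_portrait_map)
  qed simp
  then show "truncated p k (portrait_map p M) v = truncated p k (portrait_map p M') v"
    by (simp add: truncated_def)
qed

lemma truncated_portrait_zero: "truncated p k (portrait_map p (\<lambda>_. 0)) = id"
proof
  fix v
  have "portrait_map p (\<lambda>_. 0) v = v" if "v \<in> tree_verts p k"
    using that by (intro nth_equalityI) (auto simp: nth_portrait_map tree_verts_def)
  then show "truncated p k (portrait_map p (\<lambda>_. 0)) v = id v"
    by (simp add: truncated_def)
qed

lemma rotation_truncated_portrait: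
  assumes "u \<in> tree_verts p k" "length u < k"
  shows "rotation (truncated p k (portrait_map p M)) u = M u mod int (p (Suc (length u)))"
proof -
  have "u @ [0] \<in> tree_verts p k"
    using assms branching_pos by (simp add: tree_verts_snoc)
  then show ?thesis
    using branching_pos[of "length u"]
    by (simp add: rotation_def truncated_def portrait_map_snoc nth_append)
qed

lemma truncated_portrait_left_inverse:
  obtains M' where "truncated p k (portrait_map p M') \<circ> truncated p k (portrait_map p M) = id"
proof
  let ?T = "tree_verts p k"
  define M' where "M' w = - M (inv_into ?T (portrait_map p M) w)" for w
  have "truncated p k (portrait_map p M') \<circ> truncated p k (portrait_map p M)
      = truncated p k (portrait_map p (\<lambda>u. M u + M' (portrait_map p M u)))"
    by (rule truncated_portrait_comp)
  also have "\<dots> = truncated p k (portrait_map p (\<lambda>_. 0))"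
    by (rule truncated_portrait_cong) (simp add: M'_def inv_into_f_f[OF inj_on_portrait_map])
  finally show "truncated p k (portrait_map p M') \<circ> truncated p k (portrait_map p M) = id"
    by (simp add: truncated_portrait_zero)
qed

lemma group_H: "group (H p k)"
proof (rule groupI)
  fix g h assume "g \<in> carrier (H p k)" "h \<in> carrier (H p k)"
  then show "g \<otimes>\<^bsub>H p k\<^esub> h \<in> carrier (H p k)"
    by (auto simp: carrier_H truncated_portrait_comp)
next
  fix g assume "g \<in> carrier (H p k)"
  then obtain M where g: "g = truncated p k (portrait_map p M)"
    by (auto simp: carrier_H)
  obtain M' where "truncated p k (portrait_map p M') \<circ> g = id"
    unfolding g by (rule truncated_portrait_left_inverse)
  then show "\<exists>h \<in> carrier (H p k). h \<otimes>\<^bsub>H p k\<^esub> g = \<one>\<^bsub>H p k\<^esub>"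
    using truncated_portrait_in_H by auto
qed (use truncated_portrait_in_H[of k "\<lambda>_. 0"] in \<open>simp_all add: truncated_portrait_zero o_assoc\<close>)

end

section \<open>Level sums and the balanced subgroup\<close>

definition level :: "(nat \<Rightarrow> nat) \<Rightarrow> nat \<Rightarrow> nat list set" where
  "level p n = {u \<in> tree_verts p n. length u = n}"

definition level_size :: "(nat \<Rightarrow> nat) \<Rightarrow> nat \<Rightarrow> nat" where
  "level_size p n = (\<Prod>i<n. p (Suc i))"

text \<open>Vertices of a level are numbered in mixed radix, least significant letter first. The odometer
  shifts exactly at the vertices all of whose letters are maximal, where a carry
  propagates, so it adds \<open>1\<close> to this number.\<close>

definition vertex_index :: "(nat \<Rightarrow> nat) \<Rightarrow> nat list \<Rightarrow> nat" where
  "vertex_index p u = (\<Sum>i<length u. u ! i * level_size p i)"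

definition odometer_portrait :: "(nat \<Rightarrow> nat) \<Rightarrow> nat list \<Rightarrow> int" where
  "odometer_portrait p u = (if vertex_index p u = level_size p (length u) - 1 then 1 else 0)"

definition level_sum :: "(nat \<Rightarrow> nat) \<Rightarrow> (nat list \<Rightarrow> int) \<Rightarrow> nat \<Rightarrow> int" where
  "level_sum p M n = (\<Sum>u \<in> level p n. M u)"

text \<open>The balanced subgroup is the commutator subgroup of \<open>H p k\<close>: it contains all commutators
  and each of its elements is one.\<close>

definition balanced_subgroup :: "(nat \<Rightarrow> nat) \<Rightarrow> nat \<Rightarrow> (nat list \<Rightarrow> nat list) set" where
  "balanced_subgroup p k =
     {g \<in> carrier (H p k). \<forall>n<k. int (p (Suc n)) dvd level_sum p (rotation g) n}"

lemma rotation_id [simp]: "rotation id u = 0"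
  by (simp add: rotation_def)

lemma level_0: "level p 0 = {[]}"
  by (auto simp: level_def tree_verts_def)

lemma length_level: "u \<in> level p n \<Longrightarrow> length u = n"
  by (simp add: level_def)

lemma level_in_tree_verts: "u \<in> level p n \<Longrightarrow> n \<le> k \<Longrightarrow> u \<in> tree_verts p k"
  by (auto simp: level_def tree_verts_def)

lemma snoc_in_level: "u @ [x] \<in> level p (Suc n) \<longleftrightarrow> u \<in> level p n \<and> x < p (Suc n)"
  by (auto simp: level_def tree_verts_def nth_append less_Suc_eq split: if_splits)

lemma level_SucE:
  assumes "v \<in> level p (Suc n)"
  obtains u x where "v = u @ [x]" "u \<in> level p n" "x < p (Suc n)"
proof -
  have "v \<noteq> []" using assms by (auto simp: level_def)
  then obtain u x where "v = u @ [x]" by (metis rev_exhaust)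
  then show ?thesis using that assms snoc_in_level by blast
qed

lemma finite_level: "finite (level p n)"
  using finite_tree_verts[of p n] by (rule finite_subset[rotated]) (auto simp: level_def)

lemma level_size_Suc: "level_size p (Suc n) = level_size p n * p (Suc n)"
  by (simp add: level_size_def)

lemma mixed_radix_succ:
  fixes w x N P :: nat
  assumes "w < N" "x < P"
  shows "(w + 1) mod N + (if w = N - 1 then (x + 1) mod P else x) * N = (w + x * N + 1) mod (P * N)"
proof (cases "w = N - 1")
  case True
  then have "(w + 1) mod N + (if w = N - 1 then (x + 1) mod P else x) * N = ((x + 1) mod P) * N"
    using assms(1) by simp
  also have "\<dots> = ((x + 1) * N) mod (P * N)"
    by (rule mod_mult_mult2[symmetric])
  also have "(x + 1) * N = w + x * N + 1"
    using True assms(1) by (simp add: algebra_simps)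
  finally show ?thesis .
next
  case False
  have "w + x * N + 1 < (x + 1) * N"
    using False assms(1) by simp
  also have "\<dots> \<le> P * N"
    using assms(2) by (intro mult_le_mono1) simp
  finally show ?thesis
    using False assms(1) by simp
qed

lemma vertex_index_snoc: "vertex_index p (u @ [x]) = vertex_index p u + x * level_size p (length u)"
  by (simp add: vertex_index_def nth_append)

context spherical_tree
begin

lemma level_size_pos: "0 < level_size p n"
  using branching_pos by (simp add: level_size_def)

lemma vertex_index_less: "u \<in> level p n \<Longrightarrow> vertex_index p u < level_size p n"
proof (induction n arbitrary: u)
  case 0
  then show ?case by (simp add: level_0 level_size_def vertex_index_def)
next
  case (Suc n)
  from Suc.prems obtain w x where w: "u = w @ [x]" "w \<in> level p n" "x < p (Suc n)"
    by (rule level_SucE)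
  have "vertex_index p u < (x + 1) * level_size p n"
    using Suc.IH[OF w(2)] w length_level by (simp add: vertex_index_snoc)
  also have "\<dots> \<le> p (Suc n) * level_size p n"
    using w(3) by (intro mult_le_mono1) simp
  finally show ?case by (simp add: level_size_Suc mult.commute)
qed

lemma inj_on_vertex_index: "inj_on (vertex_index p) (level p n)"
proof (induction n)
  case 0
  then show ?case by (simp add: level_0)
next
  case (Suc n)
  show ?case
  proof
    fix v v' assume "v \<in> level p (Suc n)" "v' \<in> level p (Suc n)"
      and eq: "vertex_index p v = vertex_index p v'"
    then obtain w x w' x' where w: "v = w @ [x]" "w \<in> level p n"
      and w': "v' = w' @ [x']" "w' \<in> level p n"
      by (meson level_SucE)
    let ?N = "level_size p n"
    have digits: "vertex_index p w + x * ?N = vertex_index p w' + x' * ?N"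
      using eq w w' length_level by (simp add: vertex_index_snoc)
    have less: "vertex_index p w < ?N" "vertex_index p w' < ?N"
      using vertex_index_less w(2) w'(2) by auto
    have "vertex_index p w = (vertex_index p w + x * ?N) mod ?N"
      using less by simp
    also have "\<dots> = (vertex_index p w' + x' * ?N) mod ?N"
      by (simp only: digits)
    finally have "vertex_index p w = vertex_index p w'"
      using less by simp
    have "x = (vertex_index p w + x * ?N) div ?N"
      using less by simp
    also have "\<dots> = (vertex_index p w' + x' * ?N) div ?N"
      by (simp only: digits)
    finally have "x = x'"
      using less by simp
    with \<open>vertex_index p w = vertex_index p w'\<close> show "v = v'"
      using Suc.IH w w' by (auto dest: inj_onD)
  qed
qed

lemma vertex_index_image: "vertex_index p ` level p n = {..<level_size p n}"
proof (induction n)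
  case 0
  then show ?case by (auto simp: level_0 level_size_def vertex_index_def)
next
  case (Suc n)
  let ?N = "level_size p n"
  have "t \<in> vertex_index p ` level p (Suc n)" if t: "t < level_size p (Suc n)" for t
  proof -
    have "t mod ?N \<in> vertex_index p ` level p n"
      using Suc.IH level_size_pos[of n] by simp
    then obtain w where w: "w \<in> level p n" "vertex_index p w = t mod ?N"
      by force
    have "t div ?N < p (Suc n)"
      using t less_mult_imp_div_less[of t "p (Suc n)" ?N] by (simp add: level_size_Suc mult.commute)
    then have "w @ [t div ?N] \<in> level p (Suc n)"
      using w snoc_in_level by blast
    moreover have "vertex_index p (w @ [t div ?N]) = t"
      using w length_level[OF w(1)] by (simp add: vertex_index_snoc mod_div_mult_eq)
    ultimately show ?thesis by (metis image_eqI)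
  qed
  then show ?case
    using vertex_index_less by fastforce
qed

lemma bij_betw_vertex_index: "bij_betw (vertex_index p) (level p n) {..<level_size p n}"
  by (simp add: bij_betw_def inj_on_vertex_index vertex_index_image)

lemma bij_betw_portrait_map_level: "bij_betw (portrait_map p M) (level p n) (level p n)"
proof -
  have inj: "inj_on (portrait_map p M) (level p n)"
    using inj_on_portrait_map[of M n] by (rule inj_on_subset) (auto simp: level_def)
  have "portrait_map p M ` level p n \<subseteq> level p n"
    using portrait_map_in_tree_verts by (auto simp: level_def)
  then show ?thesis
    using endo_inj_surj[OF finite_level _ inj] inj by (simp add: bij_betw_def)
qed

lemma vertex_index_odometer:
  "u \<in> level p n \<Longrightarrow>
     vertex_index p (portrait_map p (odometer_portrait p) u) = (vertex_index p u + 1) mod level_size p n"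
proof (induction n arbitrary: u)
  case 0
  then show ?case by (simp add: level_0 level_size_def vertex_index_def)
next
  case (Suc n)
  from Suc.prems obtain w x where w: "u = w @ [x]" "w \<in> level p n" "x < p (Suc n)"
    by (rule level_SucE)
  let ?N = "level_size p n" and ?P = "p (Suc n)"
  have lw: "length w = n"
    using length_level[OF w(2)] .
  have carry: "nat ((int x + odometer_portrait p w) mod int ?P)
      = (if vertex_index p w = ?N - 1 then (x + 1) mod ?P else x)"
    using lw w(3) branching_pos[of n] by (simp add: odometer_portrait_def nat_mod_distrib nat_add_distrib)
  have "vertex_index p (portrait_map p (odometer_portrait p) u)
      = (vertex_index p w + 1) mod ?N + nat ((int x + odometer_portrait p w) mod int ?P) * ?N"
    using w(1) lw Suc.IH[OF w(2)] by (simp add: portrait_map_snoc vertex_index_snoc)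
  also have "\<dots> = (vertex_index p w + x * ?N + 1) mod (?P * ?N)"
    using carry mixed_radix_succ[OF vertex_index_less[OF w(2)] w(3)] by simp
  also have "\<dots> = (vertex_index p u + 1) mod level_size p (Suc n)"
    using w(1) lw by (simp add: vertex_index_snoc level_size_Suc mult.commute)
  finally show ?case .
qed

lemma level_sum_odometer_portrait: "level_sum p (odometer_portrait p) n = 1"
proof -
  have "level_sum p (odometer_portrait p) n
      = (\<Sum>u\<in>level p n. (\<lambda>t. if t = level_size p n - 1 then 1 else 0) (vertex_index p u))"
    unfolding level_sum_def by (rule sum.cong) (auto simp: odometer_portrait_def length_level)
  also have "\<dots> = (\<Sum>t<level_size p n. if t = level_size p n - 1 then 1 else 0)"
    by (rule sum.reindex_bij_betw[OF bij_betw_vertex_index])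
  also have "\<dots> = 1"
    using level_size_pos[of n] by simp
  finally show ?thesis .
qed

lemma level_sum_reindex: "(\<Sum>u \<in> level p n. M (portrait_map p M' u)) = level_sum p M n"
  unfolding level_sum_def by (rule sum.reindex_bij_betw[OF bij_betw_portrait_map_level])

lemma level_sum_portrait_comp:
  "level_sum p (\<lambda>u. M2 u + M1 (portrait_map p M2 u)) n = level_sum p M2 n + level_sum p M1 n"
  using level_sum_reindex[of M1 M2 n] by (simp add: level_sum_def sum.distrib)

lemma level_sum_rotation:
  assumes "n < k"
  shows "[level_sum p (rotation (truncated p k (portrait_map p M))) n = level_sum p M n] (mod int (p (Suc n)))"
  unfolding level_sum_def using assms
  by (intro cong_sum) (simp add: rotation_truncated_portrait level_in_tree_verts length_level cong_def)

lemma level_sum_rotation_comp: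
  assumes "g \<in> carrier (H p k)" "h \<in> carrier (H p k)" "n < k"
  shows "[level_sum p (rotation (g \<circ> h)) n
          = level_sum p (rotation g) n + level_sum p (rotation h) n] (mod int (p (Suc n)))"
proof -
  from assms(1,2) obtain M1 M2 where g: "g = truncated p k (portrait_map p M1)"
    and h: "h = truncated p k (portrait_map p M2)"
    by (auto simp: carrier_H)
  have "[level_sum p (rotation (g \<circ> h)) n
        = level_sum p (\<lambda>u. M2 u + M1 (portrait_map p M2 u)) n] (mod int (p (Suc n)))"
    unfolding g h truncated_portrait_comp by (rule level_sum_rotation[OF assms(3)])
  also have "level_sum p (\<lambda>u. M2 u + M1 (portrait_map p M2 u)) n = level_sum p M2 n + level_sum p M1 n"
    by (rule level_sum_portrait_comp)
  also have "[level_sum p M2 n + level_sum p M1 n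
      = level_sum p (rotation g) n + level_sum p (rotation h) n] (mod int (p (Suc n)))"
    using level_sum_rotation[OF assms(3)] by (simp add: g h add.commute cong_add cong_sym)
  finally show ?thesis .
qed

lemma level_sum_rotation_inv:
  assumes g: "g \<in> carrier (H p k)" and n: "n < k"
  shows "[level_sum p (rotation (inv\<^bsub>H p k\<^esub> g)) n + level_sum p (rotation g) n = 0] (mod int (p (Suc n)))"
proof -
  interpret group "H p k" by (rule group_H)
  have "[level_sum p (rotation (inv\<^bsub>H p k\<^esub> g \<circ> g)) n
      = level_sum p (rotation (inv\<^bsub>H p k\<^esub> g)) n + level_sum p (rotation g) n] (mod int (p (Suc n)))"
    using inv_closed[OF g] g n by (rule level_sum_rotation_comp)
  moreover have "inv\<^bsub>H p k\<^esub> g \<circ> g = id"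
    using l_inv[OF g] by simp
  ultimately show ?thesis
    by (simp add: level_sum_def cong_sym)
qed

lemma truncated_portrait_in_balanced_iff:
  "truncated p k (portrait_map p M) \<in> balanced_subgroup p k \<longleftrightarrow>
     (\<forall>n<k. int (p (Suc n)) dvd level_sum p M n)"
proof -
  have "int (p (Suc n)) dvd level_sum p (rotation (truncated p k (portrait_map p M))) n
      \<longleftrightarrow> int (p (Suc n)) dvd level_sum p M n" if "n < k" for n
    using cong_dvd_iff[OF level_sum_rotation[OF that]] .
  then show ?thesis
    by (simp add: balanced_subgroup_def truncated_portrait_in_H)
qed

lemma subgroup_balanced: "subgroup (balanced_subgroup p k) (H p k)"
proof -
  interpret group "H p k" by (rule group_H)
  show ?thesis
  proof (rule subgroupI)
    show "balanced_subgroup p k \<subseteq> carrier (H p k)"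
      by (auto simp: balanced_subgroup_def)
    show "balanced_subgroup p k \<noteq> {}"
      using one_closed by (auto simp: balanced_subgroup_def level_sum_def)
  next
    fix g h assume g: "g \<in> balanced_subgroup p k" and h: "h \<in> balanced_subgroup p k"
    then have "g \<in> carrier (H p k)" "h \<in> carrier (H p k)"
      by (auto simp: balanced_subgroup_def)
    then have "int (p (Suc n)) dvd level_sum p (rotation (g \<circ> h)) n" if "n < k" for n
      using g h that cong_dvd_iff[OF level_sum_rotation_comp[of g k h n]]
      by (simp add: balanced_subgroup_def)
    then show "g \<otimes>\<^bsub>H p k\<^esub> h \<in> balanced_subgroup p k"
      using m_closed[of g h] g h by (simp add: balanced_subgroup_def)
  next
    fix g assume g: "g \<in> balanced_subgroup p k"
    then have g_carrier: "g \<in> carrier (H p k)" "inv\<^bsub>H p k\<^esub> g \<in> carrier (H p k)"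
      by (auto simp: balanced_subgroup_def)
    have "int (p (Suc n)) dvd level_sum p (rotation (inv\<^bsub>H p k\<^esub> g)) n" if n: "n < k" for n
      using level_sum_rotation_inv[OF g_carrier(1) n] g n
      by (simp add: balanced_subgroup_def cong_0_iff dvd_add_left_iff)
    with g_carrier show "inv\<^bsub>H p k\<^esub> g \<in> balanced_subgroup p k"
      by (simp add: balanced_subgroup_def)
  qed
qed

lemma commutator_in_balanced:
  assumes a: "a \<in> carrier (H p k)" and b: "b \<in> carrier (H p k)"
  shows "commutator (H p k) a b \<in> balanced_subgroup p k"
proof -
  interpret group "H p k" by (rule group_H)
  let ?a' = "inv\<^bsub>H p k\<^esub> a" and ?b' = "inv\<^bsub>H p k\<^esub> b"
  have closed: "?a' \<in> carrier (H p k)" "?b' \<in> carrier (H p k)"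
    "a \<circ> b \<in> carrier (H p k)" "a \<circ> b \<circ> ?a' \<in> carrier (H p k)"
    using m_closed[OF m_closed[OF a b] inv_closed[OF a]] m_closed[OF a b] a b by simp_all
  have "int (p (Suc n)) dvd level_sum p (rotation (a \<circ> b \<circ> ?a' \<circ> ?b')) n" if n: "n < k" for n
  proof -
    define \<sigma> where "\<sigma> x = level_sum p (rotation x) n" for x
    let ?P = "int (p (Suc n))"
    have sum: "[\<sigma> (x \<circ> y) = \<sigma> x + \<sigma> y] (mod ?P)"
      if "x \<in> carrier (H p k)" "y \<in> carrier (H p k)" for x y
      unfolding \<sigma>_def using that n by (rule level_sum_rotation_comp)
    have inv: "[\<sigma> (inv\<^bsub>H p k\<^esub> x) + \<sigma> x = 0] (mod ?P)" if "x \<in> carrier (H p k)" for x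
      unfolding \<sigma>_def using that n by (rule level_sum_rotation_inv)
    have "[\<sigma> (a \<circ> b \<circ> ?a' \<circ> ?b') = \<sigma> (a \<circ> b \<circ> ?a') + \<sigma> ?b'] (mod ?P)"
      using closed by (intro sum)
    also have "[\<sigma> (a \<circ> b \<circ> ?a') + \<sigma> ?b' = \<sigma> (a \<circ> b) + \<sigma> ?a' + \<sigma> ?b'] (mod ?P)"
      using closed by (intro cong_add sum cong_refl)
    also have "[\<sigma> (a \<circ> b) + \<sigma> ?a' + \<sigma> ?b' = \<sigma> a + \<sigma> b + \<sigma> ?a' + \<sigma> ?b'] (mod ?P)"
      using a b by (intro cong_add sum cong_refl)
    also have "\<sigma> a + \<sigma> b + \<sigma> ?a' + \<sigma> ?b' = (\<sigma> ?a' + \<sigma> a) + (\<sigma> ?b' + \<sigma> b)"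
      by simp
    also have "[(\<sigma> ?a' + \<sigma> a) + (\<sigma> ?b' + \<sigma> b) = 0 + 0] (mod ?P)"
      using a b by (intro cong_add inv)
    finally show ?thesis
      by (simp only: \<sigma>_def cong_0_iff add_0)
  qed
  moreover have "a \<circ> b \<circ> ?a' \<circ> ?b' \<in> carrier (H p k)"
    using m_closed[OF closed(4,2)] by simp
  ultimately show ?thesis
    by (simp add: balanced_subgroup_def commutator_def)
qed

end

section \<open>Balanced elements are commutators\<close>

definition odometer :: "(nat \<Rightarrow> nat) \<Rightarrow> nat \<Rightarrow> nat list \<Rightarrow> nat list" where
  "odometer p k = truncated p k (portrait_map p (odometer_portrait p))"

definition level_vertex :: "(nat \<Rightarrow> nat) \<Rightarrow> nat \<Rightarrow> nat \<Rightarrow> nat list" where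
  "level_vertex p n t = inv_into (level p n) (vertex_index p) t"

text \<open>The portrait of a conjugator \<open>a\<close> with \<open>h a = a b\<close>, where \<open>C\<close> is the portrait of \<open>h\<close> and
  \<open>b\<close> the odometer, built level by level: along the cycle of \<open>b\<close> on level \<open>n\<close> the exponent of
  \<open>a\<close> is the partial sum of the defects \<open>C (a w) - odometer_portrait p w\<close> of the vertices passed.\<close>

fun conjugator_portrait :: "(nat \<Rightarrow> nat) \<Rightarrow> (nat list \<Rightarrow> int) \<Rightarrow> nat \<Rightarrow> nat list \<Rightarrow> int" where
  "conjugator_portrait p C 0 = (\<lambda>u. 0)"
| "conjugator_portrait p C (Suc n) = (\<lambda>u.
     if length u = n then
       (\<Sum>t < vertex_index p u.
          C (portrait_map p (conjugator_portrait p C n) (level_vertex p n t))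
          - odometer_portrait p (level_vertex p n t))
     else conjugator_portrait p C n u)"

lemma conjugator_portrait_stable:
  "length w < n \<Longrightarrow> n \<le> m \<Longrightarrow> conjugator_portrait p C m w = conjugator_portrait p C n w"
proof (induction m)
  case (Suc m)
  show ?case
  proof (cases "n = Suc m")
    case False
    with Suc.prems have "n \<le> m" "length w \<noteq> m"
      by auto
    with Suc.IH Suc.prems(1) show ?thesis
      by simp
  qed simp
qed simp

lemma portrait_map_conjugator_portrait:
  assumes "length w \<le> n" "n \<le> m"
  shows "portrait_map p (conjugator_portrait p C m) w = portrait_map p (conjugator_portrait p C n) w"
proof (rule portrait_map_cong)
  fix i assume "i < length w"
  with assms show "conjugator_portrait p C m (take i w) = conjugator_portrait p C n (take i w)"
    by (intro conjugator_portrait_stable) auto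
qed

lemma conjugator_portrait_on_level:
  assumes "length w = n" "n < k"
  shows "conjugator_portrait p C k w
    = (\<Sum>t < vertex_index p w. C (portrait_map p (conjugator_portrait p C n) (level_vertex p n t))
                                 - odometer_portrait p (level_vertex p n t))"
  using conjugator_portrait_stable[of w "Suc n" k p C] assms by simp

context spherical_tree
begin

lemma odometer_in_H: "odometer p k \<in> carrier (H p k)"
  by (simp add: odometer_def truncated_portrait_in_H)

lemma level_vertex_index: "u \<in> level p n \<Longrightarrow> level_vertex p n (vertex_index p u) = u"
  unfolding level_vertex_def by (rule inv_into_f_f[OF inj_on_vertex_index])

lemma bij_betw_level_vertex: "bij_betw (level_vertex p n) {..<level_size p n} (level p n)"
  unfolding level_vertex_def by (rule bij_betw_inv_into[OF bij_betw_vertex_index])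

lemma sum_level_defects:
  "(\<Sum>t < level_size p n. C (portrait_map p B (level_vertex p n t)) - odometer_portrait p (level_vertex p n t))
     = level_sum p C n - 1"
proof -
  have "(\<Sum>t < level_size p n. C (portrait_map p B (level_vertex p n t)) - odometer_portrait p (level_vertex p n t))
      = (\<Sum>w \<in> level p n. C (portrait_map p B w) - odometer_portrait p w)"
    by (rule sum.reindex_bij_betw[OF bij_betw_level_vertex])
  also have "\<dots> = (\<Sum>w \<in> level p n. C (portrait_map p B w)) - level_sum p (odometer_portrait p) n"
    unfolding level_sum_def by (rule sum_subtractf)
  also have "\<dots> = level_sum p C n - 1"
    by (simp only: level_sum_reindex level_sum_odometer_portrait)
  finally show ?thesis .
qed

lemma conjugator_portrait_cong:
  assumes u: "u \<in> level p n" and n: "n < k"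
    and C_sum: "[level_sum p C n = 1] (mod int (p (Suc n)))"
  defines "A \<equiv> conjugator_portrait p C k"
  shows "[A u + C (portrait_map p A u)
          = odometer_portrait p u + A (portrait_map p (odometer_portrait p) u)] (mod int (p (Suc n)))"
proof -
  let ?N = "level_size p n" and ?odo = "portrait_map p (odometer_portrait p)"
  define S where "S t = (\<Sum>s < t. C (portrait_map p (conjugator_portrait p C n) (level_vertex p n s))
                                  - odometer_portrait p (level_vertex p n s))" for t
  have A_level: "A w = S (vertex_index p w)" if "w \<in> level p n" for w
    unfolding A_def S_def using that n by (intro conjugator_portrait_on_level length_level)
  have A_map: "portrait_map p A u = portrait_map p (conjugator_portrait p C n) u"
    using u n portrait_map_conjugator_portrait[where w = u and n = n and m = k] by (simp add: A_def length_level)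
  have S_Suc: "S (vertex_index p u + 1)
      = S (vertex_index p u) + C (portrait_map p A u) - odometer_portrait p u"
    using A_map by (simp add: S_def level_vertex_index[OF u])
  have "?odo u \<in> level p n"
    using u portrait_map_in_tree_verts by (auto simp: level_def)
  then have A_odo: "A (?odo u) = S ((vertex_index p u + 1) mod ?N)"
    using A_level vertex_index_odometer[OF u] by simp
  show ?thesis
  proof (cases "vertex_index p u + 1 < ?N")
    case True
    then show ?thesis
      using A_level[OF u] A_odo S_Suc by simp
  next
    case False
    \<comment> \<open>\<open>u\<close> is the last vertex of the cycle; closing it up uses the level sum of \<open>C\<close>.\<close>
    with vertex_index_less[OF u] have last: "vertex_index p u + 1 = ?N"
      by simp
    then have odometer_u: "odometer_portrait p u = 1"
      using u by (simp add: odometer_portrait_def length_level)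
    have "S ?N = level_sum p C n - 1"
      unfolding S_def by (rule sum_level_defects)
    then have "A u + C (portrait_map p A u) = level_sum p C n"
      using A_level[OF u] S_Suc last odometer_u by simp
    moreover have "odometer_portrait p u + A (?odo u) = 1"
      using A_odo last odometer_u by (simp add: S_def)
    ultimately show ?thesis
      using C_sum by simp
  qed
qed

lemma conjugate_to_odometer:
  assumes h: "h \<in> carrier (H p k)"
    and sums: "\<And>n. n < k \<Longrightarrow> [level_sum p (rotation h) n = 1] (mod int (p (Suc n)))"
  shows "\<exists>a \<in> carrier (H p k). h \<circ> a = a \<circ> odometer p k"
proof
  define A where "A = conjugator_portrait p (rotation h) k"
  show "truncated p k (portrait_map p A) \<in> carrier (H p k)"
    by (rule truncated_portrait_in_H)
  have "h \<circ> truncated p k (portrait_map p A)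
      = truncated p k (portrait_map p (\<lambda>u. A u + rotation h (portrait_map p A u)))"
    by (subst H_eq_truncated_portrait[OF h]) (rule truncated_portrait_comp)
  also have "\<dots> = truncated p k (portrait_map p
      (\<lambda>u. odometer_portrait p u + A (portrait_map p (odometer_portrait p) u)))"
  proof (rule truncated_portrait_cong)
    fix u assume "u \<in> tree_verts p k" "length u < k"
    then show "[A u + rotation h (portrait_map p A u)
        = odometer_portrait p u + A (portrait_map p (odometer_portrait p) u)] (mod int (p (Suc (length u))))"
      unfolding A_def by (intro conjugator_portrait_cong sums) (auto simp: level_def tree_verts_def)
  qed
  also have "\<dots> = truncated p k (portrait_map p A) \<circ> odometer p k"
    by (simp add: odometer_def truncated_portrait_comp)
  finally show "h \<circ> truncated p k (portrait_map p A) = truncated p k (portrait_map p A) \<circ> odometer p k" .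
qed

theorem balanced_is_commutator:
  assumes g: "g \<in> balanced_subgroup p k"
  shows "\<exists>a \<in> carrier (H p k). \<exists>b \<in> carrier (H p k). g = commutator (H p k) a b"
proof -
  interpret group "H p k" by (rule group_H)
  let ?b = "odometer p k"
  have g_carrier: "g \<in> carrier (H p k)"
    using g by (simp add: balanced_subgroup_def)
  have "[level_sum p (rotation (g \<circ> ?b)) n = 1] (mod int (p (Suc n)))" if n: "n < k" for n
  proof -
    have "[level_sum p (rotation (g \<circ> ?b)) n
        = level_sum p (rotation g) n + level_sum p (rotation ?b) n] (mod int (p (Suc n)))"
      using g_carrier odometer_in_H n by (rule level_sum_rotation_comp)
    also have "[level_sum p (rotation g) n + level_sum p (rotation ?b) n = 0 + 1] (mod int (p (Suc n)))"
      using g n level_sum_rotation[OF n, of "odometer_portrait p"]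
      by (intro cong_add) (simp_all add: balanced_subgroup_def cong_0_iff odometer_def level_sum_odometer_portrait)
    finally show ?thesis by simp
  qed
  then obtain a where a: "a \<in> carrier (H p k)" "g \<circ> ?b \<circ> a = a \<circ> ?b"
    using conjugate_to_odometer[of "g \<circ> ?b"] m_closed[OF g_carrier odometer_in_H] by auto
  then have "commutator (H p k) a ?b = g"
    using g_carrier odometer_in_H by (intro commutator_eqI) simp_all
  with a(1) odometer_in_H show ?thesis
    by blast
qed

lemma exists_nontrivial_balanced:
  assumes "2 \<le> p 1" "2 \<le> p 2"
  shows "\<exists>g \<in> balanced_subgroup p 2. g \<noteq> id"
proof
  define M :: "nat list \<Rightarrow> int" where
    "M u = (if u = [0] then 1 else 0) - (if u = [1] then 1 else 0)" for u
  let ?g = "truncated p 2 (portrait_map p M)"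
  have "[0] \<in> level p 1" "[1] \<in> level p 1"
    using assms by (auto simp: level_def tree_verts_def)
  then have "level_sum p M 1 = 0"
    using finite_level[of p 1] by (simp add: level_sum_def M_def sum_subtractf)
  moreover have "level_sum p M 0 = 0"
    by (simp add: level_sum_def level_0 M_def)
  ultimately have "\<forall>n<2. int (p (Suc n)) dvd level_sum p M n"
    by (simp add: less_2_cases_iff)
  then show "?g \<in> balanced_subgroup p 2"
    by (simp add: truncated_portrait_in_balanced_iff)
  have "[0, 0] \<in> tree_verts p 2"
    using branching_pos[of 0] branching_pos[of 1] by (auto simp: tree_verts_def less_Suc_eq)
  then have "?g [0, 0] = [0, 1]"
    using assms branching_pos[of 0] by (simp add: truncated_def portrait_map_def M_def numeral_2_eq_2 upt_rec)
  then show "?g \<noteq> id"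
    by (auto dest: fun_cong[where x = "[0, 0]"])
qed

end

section \<open>The direct limit of the iterated wreath products\<close>

context spherical_tree
begin

lemma extend_step_truncated_portrait:
  "extend_step p k (truncated p k (portrait_map p M))
     = truncated p (Suc k) (portrait_map p (\<lambda>u. if length u < k then M u else 0))"
proof
  fix v
  show "extend_step p k (truncated p k (portrait_map p M)) v
      = truncated p (Suc k) (portrait_map p (\<lambda>u. if length u < k then M u else 0)) v"
  proof (cases "v \<in> tree_verts p (Suc k)")
    case True
    then have "take k v \<in> tree_verts p k" "\<And>i. i < length v \<Longrightarrow> v ! i < p (Suc i)"
      by (auto simp: tree_verts_def)
    moreover have "portrait_map p M (take k v) @ drop k v
        = portrait_map p (\<lambda>u. if length u < k then M u else 0) v"
      by (rule nth_equalityI) (auto simp: nth_append nth_portrait_map min_def calculation(2))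
    ultimately show ?thesis
      using True by (simp add: extend_step_def truncated_def)
  qed (simp add: extend_step_def truncated_def)
qed

lemma extend_step_hom: "extend_step p k \<in> hom (H p k) (H p (Suc k))"
proof (rule homI)
  fix g assume "g \<in> carrier (H p k)"
  then show "extend_step p k g \<in> carrier (H p (Suc k))"
    by (auto simp: carrier_H extend_step_truncated_portrait)
next
  fix g h assume "g \<in> carrier (H p k)" "h \<in> carrier (H p k)"
  then obtain M1 M2 where g: "g = truncated p k (portrait_map p M1)"
    and h: "h = truncated p k (portrait_map p M2)"
    by (auto simp: carrier_H)
  define cut :: "(nat list \<Rightarrow> int) \<Rightarrow> nat list \<Rightarrow> int" where
    "cut M = (\<lambda>u. if length u < k then M u else 0)" for M
  have "extend_step p k (g \<otimes>\<^bsub>H p k\<^esub> h)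
      = truncated p (Suc k) (portrait_map p (cut (\<lambda>u. M2 u + M1 (portrait_map p M2 u))))"
    by (simp add: g h cut_def truncated_portrait_comp extend_step_truncated_portrait)
  also have "\<dots> = truncated p (Suc k) (portrait_map p (\<lambda>u. cut M2 u + cut M1 (portrait_map p (cut M2) u)))"
  proof (rule truncated_portrait_cong)
    fix u
    have "portrait_map p (cut M2) u = portrait_map p M2 u" if "length u < k"
      using that by (intro portrait_map_cong) (simp add: cut_def)
    then show "[cut (\<lambda>u. M2 u + M1 (portrait_map p M2 u)) u
        = cut M2 u + cut M1 (portrait_map p (cut M2) u)] (mod int (p (Suc (length u))))"
      by (simp add: cut_def)
  qed
  also have "\<dots> = extend_step p k g \<otimes>\<^bsub>H p (Suc k)\<^esub> extend_step p k h"
    by (simp add: g h cut_def truncated_portrait_comp extend_step_truncated_portrait)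
  finally show "extend_step p k (g \<otimes>\<^bsub>H p k\<^esub> h) = extend_step p k g \<otimes>\<^bsub>H p (Suc k)\<^esub> extend_step p k h" .
qed

lemma inj_on_extend_step: "inj_on (extend_step p k) (carrier (H p k))"
proof
  fix g h assume g: "g \<in> carrier (H p k)" and h: "h \<in> carrier (H p k)"
    and eq: "extend_step p k g = extend_step p k h"
  show "g = h"
  proof
    fix v
    show "g v = h v"
    proof (cases "v \<in> tree_verts p k")
      case True
      then have "v \<in> tree_verts p (Suc k)" "take k v = v" "drop k v = []"
        by (auto simp: tree_verts_def)
      then show ?thesis
        using fun_cong[OF eq, of v] by (simp add: extend_step_def)
    qed (simp add: H_fixes_outside[OF g] H_fixes_outside[OF h])
  qed
qed

lemma extend_step_balanced:
  assumes "g \<in> balanced_subgroup p k"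
  shows "extend_step p k g \<in> balanced_subgroup p (Suc k)"
proof -
  obtain M where g: "g = truncated p k (portrait_map p M)"
    using assms by (auto simp: balanced_subgroup_def carrier_H)
  with assms have sums: "\<forall>n<k. int (p (Suc n)) dvd level_sum p M n"
    by (simp add: truncated_portrait_in_balanced_iff)
  have "level_sum p (\<lambda>u. if length u < k then M u else 0) n = (if n < k then level_sum p M n else 0)" for n
    by (auto simp: level_sum_def length_level intro: sum.cong)
  with sums show ?thesis
    by (simp add: g extend_step_truncated_portrait truncated_portrait_in_balanced_iff less_Suc_eq)
qed

sublocale direct_system "H p" "system_maps (extend_step p)"
  using group_H extend_step_hom by (rule direct_system_system_maps)

lemma derived_limit_commutators:
  assumes "x \<in> derived limit (carrier limit)"
  shows "\<exists>a \<in> carrier limit. \<exists>b \<in> carrier limit. x = commutator limit a b"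
proof -
  have "derived limit (carrier limit) \<subseteq> {to_limit k g | k g. g \<in> balanced_subgroup p k}"
    using subgroup_balanced
      system_maps_into[where S = "balanced_subgroup p" and step = "extend_step p", OF extend_step_balanced]
      commutator_in_balanced
    by (rule derived_limit_subset)
  with assms obtain k g where "g \<in> balanced_subgroup p k" "x = to_limit k g"
    by blast
  then obtain a b where ab: "a \<in> carrier (H p k)" "b \<in> carrier (H p k)"
    and "x = to_limit k (commutator (H p k) a b)"
    using balanced_is_commutator by blast
  then have "x = commutator limit (to_limit k a) (to_limit k b)"
    by (simp add: to_limit_commutator)
  with ab show ?thesis
    using to_limit_closed by blast
qed

lemma derived_limit_nontrivial:
  assumes "2 \<le> p 1" "2 \<le> p 2"
  shows "derived limit (carrier limit) \<noteq> {\<one>\<^bsub>limit\<^esub>}"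
proof -
  obtain g where g: "g \<in> balanced_subgroup p 2" "g \<noteq> id"
    using exists_nontrivial_balanced[OF assms] by blast
  then obtain a b where ab: "a \<in> carrier (H p 2)" "b \<in> carrier (H p 2)"
    and "g = commutator (H p 2) a b"
    using balanced_is_commutator by blast
  then have "to_limit 2 g = commutator limit (to_limit 2 a) (to_limit 2 b)"
    by (simp add: to_limit_commutator)
  also have "\<dots> \<in> derived limit (carrier limit)"
    using ab by (intro group.commutator_in_derived[OF group_limit] to_limit_closed)
  finally have derived: "to_limit 2 g \<in> derived limit (carrier limit)" .
  have "to_limit 2 g \<noteq> to_limit 2 id"
  proof
    assume "to_limit 2 g = to_limit 2 id"
    moreover have "g \<in> carrier (H p 2)" "id \<in> carrier (H p 2)"
      using g(1) truncated_portrait_in_H[of 2 "\<lambda>_. 0"]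
      by (simp_all add: balanced_subgroup_def truncated_portrait_zero)
    ultimately have "g = id"
      by (intro to_limit_inj[OF inj_on_system_maps[where step = "extend_step p", OF extend_step_hom inj_on_extend_step]])
    with g(2) show False ..
  qed
  with derived show ?thesis
    by (auto simp: one_limit[of 2])
qed

end

theorem corollary3:
  fixes p :: "nat \<Rightarrow> nat"
  assumes "\<forall>i \<ge> 1. p i \<ge> 2"
  shows "commutator_width (direct_limit (H p) (system_maps (extend_step p))) = 1"
proof -
  interpret spherical_tree p
  proof
    fix i :: nat
    show "0 < p (Suc i)"
      using assms[rule_format, of "Suc i"] by simp
  qed
  show ?thesis
    using assms by (intro group.commutator_width_eq_1 group_limit derived_limit_commutators
        derived_limit_nontrivial) auto
qed

end
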